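(* Let $(\Sigma,\mathscr{P})$ be a Kelvin-Planck theory with a Clausius-Duhem pair $(\eta^0,T^0)$ such that every Clausius-Duhem pair $(\eta,T)$ satisfies $T=\alpha T^0$, $\eta=\frac1\alpha\eta^0+\beta$ for some constants $\alpha>0$, $\beta\in\mathbb{R}$. Then: (a) the set of reversible elements of $\hat{\mathscr{P}}$ coincides with the set of all $(\Delta\mathscr{m},\mathscr{q})\in\mathscr{V}(\Sigma)$ satisfying $\int_\Sigma\eta^0\,d(\Delta\mathscr{m})=\int_\Sigma\frac{d\mathscr{q}}{T^0}$; (b) if even one member of $\{(\Delta\mathscr{m},\mathscr{q})\in\mathscr{V}(\Sigma):\int_\Sigma\eta^0\,d(\Delta\mathscr{m})>\int_\Sigma\frac{d\mathscr{q}}{T^0}\}$ belongs to $\hat{\mathscr{P}}$, then all members of this set do; (c) in particular, if $\mathscr{P}$ contains an irreversible process (a member of $\mathscr{P}$ that is not a reversible element), then $\hat{\mathscr{P}}$ contains every $(\Delta\mathscr{m},\mathscr{q})\in\mathscr{V}(\Sigma)$ with $\int_\Sigma\eta^0\,d(\Delta\mathscr{m})\ge\int_\Sigma\frac{d\mathscr{q}}{T^0}$.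
   Context: $\Sigma$ is a compact Hausdorff space. $\mathscr{M}(\Sigma)$ is the vector space of regular signed Borel measures on $\Sigma$ with its weak-star topology; $\mathscr{M}_+(\Sigma)$ the nonnegative members; $\mathscr{M}^\circ(\Sigma)=\{\mu:\mu(\Sigma)=0\}$; $\mathscr{V}(\Sigma)=\mathscr{M}^\circ(\Sigma)\oplus\mathscr{M}(\Sigma)$ with the product topology. For $\mathscr{P}\subset\mathscr{V}(\Sigma)$, $\hat{\mathscr{P}}$ is the closure of the set of nonnegative multiples of members of $\mathscr{P}$. A thermodynamical theory is $(\Sigma,\mathscr{P})$ with $\hat{\mathscr{P}}$ convex; it is Kelvin-Planck if $\hat{\mathscr{P}}\cap\{(0,\nu):\nu\in\mathscr{M}_+(\Sigma)\}=\{(0,0)\}$. A Clausius-Duhem pair is $(\eta,T)$, $\eta\in C(\Sigma,\mathbb{R})$, $T\in C(\Sigma,(0,\infty))$, with $\int_\Sigma\eta\,d(\Delta\mathscr{m})\ge\int_\Sigma\frac{d\mathscr{q}}{T}$ for all $(\Delta\mathscr{m},\mathscr{q})\in\mathscr{P}$. A reversible element is a member of $\hat{\mathscr{P}}$ whose negative also lies in $\hat{\mathscr{P}}$. *)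

theory Defs
  imports "HOL-Analysis.Analysis"
begin

text \<open>Sigma is a type 'a of class t2_space with compact UNIV.
A regular signed Borel measure on Sigma is represented (Riesz-Markov) by the
bounded linear functional f |-> integral of f on C(Sigma,R); as canonical
representative we require value 0 on non-continuous arguments.  Then the
pointwise-convergence topology on functionals (library instance for fun) is
exactly the weak-star topology on the set of measures.\<close>

type_synonym 'a msr = "('a \<Rightarrow> real) \<Rightarrow> real"

definition cfun :: "('a::topological_space \<Rightarrow> real) set" where
  "cfun = {f. continuous_on UNIV f}"

definition signed_measures :: "('a::topological_space) msr set" where
  "signed_measures = {\<mu>.
     (\<forall>f\<in>cfun. \<forall>g\<in>cfun. \<mu> (\<lambda>x. f x + g x) = \<mu> f + \<mu> g) \<and>
     (\<forall>f\<in>cfun. \<forall>c. \<mu> (\<lambda>x. c * f x) = c * \<mu> f) \<and>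
     (\<exists>C. \<forall>f\<in>cfun. \<bar>\<mu> f\<bar> \<le> C * (SUP x. \<bar>f x\<bar>)) \<and>
     (\<forall>f. f \<notin> cfun \<longrightarrow> \<mu> f = 0)}"

definition integ :: "'a msr \<Rightarrow> ('a \<Rightarrow> real) \<Rightarrow> real" where
  "integ \<mu> f = \<mu> f"

definition nonneg_measures :: "('a::topological_space) msr set" where
  "nonneg_measures = {\<mu> \<in> signed_measures.
     \<forall>f\<in>cfun. (\<forall>x. 0 \<le> f x) \<longrightarrow> 0 \<le> integ \<mu> f}"

definition zero_measures :: "('a::topological_space) msr set" where
  "zero_measures = {\<mu> \<in> signed_measures. integ \<mu> (\<lambda>_. 1) = 0}"

definition Vspace :: "('a::topological_space msr \<times> 'a msr) set" where
  "Vspace = zero_measures \<times> signed_measures"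

definition zero_msr :: "'a msr" where
  "zero_msr = (\<lambda>f. 0)"

definition scale_pair :: "real \<Rightarrow> 'a msr \<times> 'a msr \<Rightarrow> 'a msr \<times> 'a msr" where
  "scale_pair c v = ((\<lambda>f. c * fst v f), (\<lambda>f. c * snd v f))"

definition neg_pair :: "'a msr \<times> 'a msr \<Rightarrow> 'a msr \<times> 'a msr" where
  "neg_pair v = ((\<lambda>f. - fst v f), (\<lambda>f. - snd v f))"

definition add_pair :: "'a msr \<times> 'a msr \<Rightarrow> 'a msr \<times> 'a msr \<Rightarrow> 'a msr \<times> 'a msr" where
  "add_pair v w = ((\<lambda>f. fst v f + fst w f), (\<lambda>f. snd v f + snd w f))"

definition convex_pairs :: "('a msr \<times> 'a msr) set \<Rightarrow> bool" where
  "convex_pairs S \<longleftrightarrow> (\<forall>v\<in>S. \<forall>w\<in>S. \<forall>t::real. 0 \<le> t \<and> t \<le> 1 \<longrightarrow>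
     add_pair (scale_pair t v) (scale_pair (1 - t) w) \<in> S)"

definition hat :: "('a::topological_space msr \<times> 'a msr) set \<Rightarrow> ('a msr \<times> 'a msr) set" where
  "hat P = Vspace \<inter> closure {scale_pair c p | c p. 0 \<le> c \<and> p \<in> P}"

definition thermo_theory :: "('a::topological_space msr \<times> 'a msr) set \<Rightarrow> bool" where
  "thermo_theory P \<longleftrightarrow> P \<subseteq> Vspace \<and> convex_pairs (hat P)"

definition kelvin_planck :: "('a::topological_space msr \<times> 'a msr) set \<Rightarrow> bool" where
  "kelvin_planck P \<longleftrightarrow> thermo_theory P \<and>
     hat P \<inter> {(zero_msr, \<nu>) | \<nu>. \<nu> \<in> nonneg_measures} = {(zero_msr, zero_msr)}"

definition clausius_duhem :: "('a::topological_space msr \<times> 'a msr) set \<Rightarrow> ('a \<Rightarrow> real) \<Rightarrow> ('a \<Rightarrow> real) \<Rightarrow> bool" where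
  "clausius_duhem P \<eta> T \<longleftrightarrow> continuous_on UNIV \<eta> \<and> continuous_on UNIV T \<and> (\<forall>x. 0 < T x) \<and>
     (\<forall>(dm, q)\<in>P. integ dm \<eta> \<ge> integ q (\<lambda>x. 1 / T x))"

definition reversible :: "('a::topological_space msr \<times> 'a msr) set \<Rightarrow> 'a msr \<times> 'a msr \<Rightarrow> bool" where
  "reversible P v \<longleftrightarrow> v \<in> hat P \<and> neg_pair v \<in> hat P"

end

theory Submission
  imports Defs
begin

(* A point v of V outside the closed convex cone hat P has a weak-star neighbourhood that
   depends on finitely many coordinates; projecting to them and taking the nearest point of the
   projected cone separates v from hat P by a continuous functional
   (dm, q) |-> dm eta + q g.  This functional is nonnegative on P, so for small s > 0 the pair
   (eta0 + s eta, 1 / (1 / T0 - s g)) is again a Clausius-Duhem pair.  Uniqueness of the pair up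
   to the gauge alpha, beta forces the functional to be a multiple of the Clausius-Duhem gap
   dm eta0 - q (1 / T0).  Hence every v in V outside hat P is separated from hat P by the gap
   itself, and (a), (b), (c) follow by comparing signs. *)

section \<open>Separating a point from a convex cone in a product of real lines\<close>

lemma nonneg_if_quadratic_nonneg_near_zero:
  fixes A B :: real
  assumes "\<And>t. 0 < t \<Longrightarrow> t < 1 \<Longrightarrow> 0 \<le> 2 * t * A + t\<^sup>2 * B"
  shows "0 \<le> A"
proof (rule ccontr)
  assume "\<not> 0 \<le> A"
  hence "0 < - A / (\<bar>B\<bar> + 1)" by (intro divide_pos_pos) auto
  define t where "t = min (1/2) (- A / (\<bar>B\<bar> + 1))"
  have t: "0 < t" "t < 1" using \<open>0 < - A / (\<bar>B\<bar> + 1)\<close> by (auto simp: t_def)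
  have "t * B \<le> t * \<bar>B\<bar>" using t by (simp add: mult_left_mono)
  also have "\<dots> \<le> (- A / (\<bar>B\<bar> + 1)) * \<bar>B\<bar>" by (intro mult_right_mono) (auto simp: t_def)
  also have "\<dots> \<le> - A" using \<open>\<not> 0 \<le> A\<close> by (simp add: field_simps)
  finally have "t * (2 * A + t * B) < 0"
    using t \<open>\<not> 0 \<le> A\<close> by (intro mult_pos_neg) auto
  with assms[OF t] show False by (simp add: power2_eq_square algebra_simps)
qed

lemma exists_nearest_point_finite_support:
  fixes C :: "('i \<Rightarrow> real) set"
  assumes S: "finite S" and "closed C" and c: "c \<in> C"
    and supp: "\<And>x i. x \<in> C \<Longrightarrow> i \<notin> S \<Longrightarrow> x i = 0"
  shows "\<exists>m\<in>C. \<forall>y\<in>C. (\<Sum>i\<in>S. (m i - z i)\<^sup>2) \<le> (\<Sum>i\<in>S. (y i - z i)\<^sup>2)"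
proof -
  define Q where "Q y = (\<Sum>i\<in>S. (y i - z i)\<^sup>2)" for y :: "'i \<Rightarrow> real"
  have Q_ge: "\<bar>y i - z i\<bar> \<le> sqrt (Q y)" if "i \<in> S" for y i
  proof -
    have "(y i - z i)\<^sup>2 \<le> Q y" unfolding Q_def using S that by (intro member_le_sum) auto
    thus ?thesis by (metis real_sqrt_abs real_sqrt_le_mono)
  qed
  \<comment> \<open>Outside this box every point is farther from \<open>z\<close> than \<open>c\<close>; inside, \<open>C\<close> is compact.\<close>
  define B where "B = PiE UNIV (\<lambda>i. if i \<in> S then cball (z i) (sqrt (Q c)) else {0})"
  have "compactin (product_topology (\<lambda>i. euclidean) UNIV) B"
    unfolding B_def compactin_PiE by auto
  hence "compact (C \<inter> B)"
    using \<open>closed C\<close> by (simp add: euclidean_product_topology closed_Int_compact)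
  moreover have "continuous_on (C \<inter> B) Q"
    unfolding Q_def
    by (intro continuous_intros continuous_on_subset[OF continuous_on_product_coordinates]) auto
  moreover have "c \<in> C \<inter> B"
    using c supp Q_ge by (auto simp: B_def dist_real_def abs_minus_commute)
  ultimately obtain m where m: "m \<in> C \<inter> B" and min: "\<And>y. y \<in> C \<inter> B \<Longrightarrow> Q m \<le> Q y"
    using continuous_attains_inf[of "C \<inter> B" Q] by blast
  have "Q m \<le> Q y" if y: "y \<in> C" for y
  proof (cases "y \<in> B")
    case False
    then obtain i where "i \<in> S" "sqrt (Q c) < \<bar>y i - z i\<bar>"
      using supp[OF y] by (force simp: B_def dist_real_def abs_minus_commute not_le split: if_splits)
    hence "sqrt (Q c) < sqrt (Q y)" using Q_ge[of i y] by linarith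
    hence "Q c < Q y" by simp
    moreover have "Q m \<le> Q c" using min \<open>c \<in> C \<inter> B\<close> by blast
    ultimately show ?thesis by linarith
  qed (use min y in blast)
  thus ?thesis using m unfolding Q_def by blast
qed

lemma mem_closure_invariant:
  assumes "continuous_on UNIV f" "f ` D \<subseteq> D" "x \<in> closure D"
  shows "f x \<in> closure D"
proof -
  have "f ` closure D \<subseteq> closure D"
    by (rule image_closure_subset[OF continuous_on_subset[OF assms(1)] closed_closure])
      (use assms(2) closure_subset in auto)
  thus ?thesis using assms(3) by blast
qed

lemma closure_coordinate_zero:
  fixes D :: "('i \<Rightarrow> real) set"
  assumes "\<And>x. x \<in> D \<Longrightarrow> x i = 0" "x \<in> closure D"
  shows "x i = 0"
proof -
  have "closure D \<subseteq> {x. x i = 0}"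
    using assms(1) by (intro closure_minimal closed_Collect_eq continuous_intros) auto
  thus ?thesis using assms(2) by auto
qed

text \<open>The separating vector is \<open>m - z\<close>, where \<open>m\<close> is the point of \<open>closure D\<close> nearest to \<open>z\<close>.\<close>
lemma cone_separation_finite_support:
  fixes D :: "('i \<Rightarrow> real) set"
  assumes S: "finite S"
    and supp_D: "\<And>x i. x \<in> D \<Longrightarrow> i \<notin> S \<Longrightarrow> x i = 0"
    and supp_z: "\<And>i. i \<notin> S \<Longrightarrow> z i = 0"
    and zero: "(\<lambda>_. 0) \<in> D"
    and add: "\<And>x y. x \<in> D \<Longrightarrow> y \<in> D \<Longrightarrow> (\<lambda>i. x i + y i) \<in> D"
    and scale: "\<And>x c. x \<in> D \<Longrightarrow> 0 \<le> c \<Longrightarrow> (\<lambda>i. c * x i) \<in> D"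
    and z: "z \<notin> closure D"
  shows "\<exists>a. (\<Sum>i\<in>S. a i * z i) < 0 \<and> (\<forall>x\<in>D. 0 \<le> (\<Sum>i\<in>S. a i * x i))"
proof -
  define Q where "Q y = (\<Sum>i\<in>S. (y i - z i)\<^sup>2)" for y :: "'i \<Rightarrow> real"
  have supp_closure: "x i = 0" if "x \<in> closure D" "i \<notin> S" for x i
    using closure_coordinate_zero[of D i x] supp_D that by blast
  obtain m where m: "m \<in> closure D" and min: "\<And>y. y \<in> closure D \<Longrightarrow> Q m \<le> Q y"
    using exists_nearest_point_finite_support[of S "closure D" "\<lambda>_. 0" z] S zero supp_closure
    unfolding Q_def by (meson closed_closure closure_subset subsetD)
  define a where "a i = m i - z i" for i
  have "0 \<le> (\<Sum>i\<in>S. a i * x i)" if x: "x \<in> D" for x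
  proof (rule nonneg_if_quadratic_nonneg_near_zero[where B = "\<Sum>i\<in>S. (x i)\<^sup>2"])
    fix t :: real assume "0 < t" "t < 1"
    have "continuous_on UNIV (\<lambda>y i. y i + t * x i)"
      by (intro continuous_intros continuous_on_product_coordinates)
    moreover have "(\<lambda>y i. y i + t * x i) ` D \<subseteq> D" using add scale x \<open>0 < t\<close> by auto
    ultimately have "(\<lambda>i. m i + t * x i) \<in> closure D" using m by (rule mem_closure_invariant)
    hence "Q m \<le> Q (\<lambda>i. m i + t * x i)" by (rule min)
    also have "\<dots> = (\<Sum>i\<in>S. (m i - z i)\<^sup>2 + (2 * t * (a i * x i) + t\<^sup>2 * (x i)\<^sup>2))"
      unfolding Q_def a_def by (intro sum.cong) (auto simp: power2_eq_square algebra_simps)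
    also have "\<dots> = Q m + (2 * t * (\<Sum>i\<in>S. a i * x i) + t\<^sup>2 * (\<Sum>i\<in>S. (x i)\<^sup>2))"
      by (simp add: Q_def sum.distrib sum_distrib_left)
    finally show "0 \<le> 2 * t * (\<Sum>i\<in>S. a i * x i) + t\<^sup>2 * (\<Sum>i\<in>S. (x i)\<^sup>2)" by simp
  qed
  moreover have "0 \<le> - (\<Sum>i\<in>S. a i * m i)"
  proof (rule nonneg_if_quadratic_nonneg_near_zero[where B = "\<Sum>i\<in>S. (m i)\<^sup>2"])
    fix t :: real assume "0 < t" "t < 1"
    have "continuous_on UNIV (\<lambda>y i. (1 - t) * y i)"
      by (intro continuous_intros continuous_on_product_coordinates)
    moreover have "(\<lambda>y i. (1 - t) * y i) ` D \<subseteq> D" using scale \<open>t < 1\<close> by auto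
    ultimately have "(\<lambda>i. (1 - t) * m i) \<in> closure D" using m by (rule mem_closure_invariant)
    hence "Q m \<le> Q (\<lambda>i. (1 - t) * m i)" by (rule min)
    also have "\<dots> = (\<Sum>i\<in>S. (m i - z i)\<^sup>2 + (2 * t * - (a i * m i) + t\<^sup>2 * (m i)\<^sup>2))"
      unfolding Q_def a_def by (intro sum.cong) (auto simp: power2_eq_square algebra_simps)
    also have "\<dots> = Q m + (2 * t * - (\<Sum>i\<in>S. a i * m i) + t\<^sup>2 * (\<Sum>i\<in>S. (m i)\<^sup>2))"
      by (simp add: Q_def sum.distrib sum_distrib_left sum_negf sum_subtractf)
    finally show "0 \<le> 2 * t * - (\<Sum>i\<in>S. a i * m i) + t\<^sup>2 * (\<Sum>i\<in>S. (m i)\<^sup>2)" by simp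
  qed
  moreover have "0 < Q m"
  proof -
    have "m \<noteq> z" using m z by auto
    then obtain i where "m i \<noteq> z i" by auto
    hence "i \<in> S" using supp_closure[OF m] supp_z by fastforce
    thus ?thesis unfolding Q_def using S \<open>m i \<noteq> z i\<close> by (intro sum_pos2) auto
  qed
  moreover have "(\<Sum>i\<in>S. a i * z i) = (\<Sum>i\<in>S. a i * m i) - Q m"
    by (simp add: Q_def a_def sum_subtractf[symmetric] power2_eq_square algebra_simps)
  ultimately show ?thesis by (intro exI[of _ a]) auto
qed

text \<open>Project onto the coordinates constrained by a basic neighbourhood of \<open>z\<close> that misses \<open>K\<close>.\<close>
lemma notin_closure_finite_projection:
  fixes K :: "('i \<Rightarrow> real) set"
  assumes z: "z \<notin> closure K"
  shows "\<exists>S. finite S \<and>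
    (\<lambda>i. if i \<in> S then z i else 0) \<notin> closure ((\<lambda>x i. if i \<in> S then x i else 0) ` K)"
proof -
  have "openin (product_topology (\<lambda>i. euclidean) UNIV) (- closure K)"
    by (auto simp flip: open_fun_def)
  from product_topology_open_contains_basis[OF this, of z] z
  obtain X where X: "z \<in> PiE UNIV X" "\<And>i. open (X i)" "finite {i. X i \<noteq> UNIV}"
    and X_disjoint: "PiE UNIV X \<subseteq> - closure K"
    by auto
  define S where "S = {i. X i \<noteq> UNIV}"
  define \<pi> where "\<pi> x = (\<lambda>i. if i \<in> S then x i else 0)" for x :: "'i \<Rightarrow> real"
  have "\<pi> z \<notin> closure (\<pi> ` K)"
  proof
    define U where "U = (\<Inter>i\<in>S. (\<lambda>y. y i) -` X i)"
    have "open ((\<lambda>y. y i) -` X i)" for i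
      using X(2) by (rule open_vimage) simp
    hence "open U" unfolding U_def using X(3) S_def by auto
    moreover assume "\<pi> z \<in> closure (\<pi> ` K)"
    moreover have "\<pi> z \<in> U" using X(1) by (auto simp: U_def \<pi>_def)
    ultimately obtain x where "x \<in> K" "\<pi> x \<in> U"
      using open_Int_closure_eq_empty[of U "\<pi> ` K"] by blast
    hence "x \<in> PiE UNIV X" by (auto simp: U_def \<pi>_def S_def)
    thus False using X_disjoint \<open>x \<in> K\<close> closure_subset by blast
  qed
  thus ?thesis using X(3) unfolding S_def \<pi>_def by blast
qed

lemma cone_separation_product_topology:
  fixes K :: "('i \<Rightarrow> real) set"
  assumes zero: "(\<lambda>_. 0) \<in> K"
    and add: "\<And>x y. x \<in> K \<Longrightarrow> y \<in> K \<Longrightarrow> (\<lambda>i. x i + y i) \<in> K"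
    and scale: "\<And>x c. x \<in> K \<Longrightarrow> 0 \<le> c \<Longrightarrow> (\<lambda>i. c * x i) \<in> K"
    and z: "z \<notin> closure K"
  shows "\<exists>S a. finite S \<and> (\<Sum>i\<in>S. a i * z i) < 0 \<and> (\<forall>x\<in>K. 0 \<le> (\<Sum>i\<in>S. a i * x i))"
proof -
  obtain S where "finite S"
    and separated: "(\<lambda>i. if i \<in> S then z i else 0) \<notin> closure ((\<lambda>x i. if i \<in> S then x i else 0) ` K)"
    using notin_closure_finite_projection[OF z] by blast
  define \<pi> where "\<pi> x = (\<lambda>i. if i \<in> S then x i else 0)" for x :: "'i \<Rightarrow> real"
  have zero': "(\<lambda>_. 0) \<in> \<pi> ` K"
    using zero image_eqI[of "\<lambda>_. 0" \<pi> "\<lambda>_. 0"] by (auto simp: \<pi>_def)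
  have add': "(\<lambda>i. x i + y i) \<in> \<pi> ` K" if xy: "x \<in> \<pi> ` K" "y \<in> \<pi> ` K" for x y
  proof -
    obtain x' y' where "x' \<in> K" "y' \<in> K" "x = \<pi> x'" "y = \<pi> y'" using xy by blast
    hence "(\<lambda>i. x i + y i) = \<pi> (\<lambda>i. x' i + y' i)" by (auto simp: \<pi>_def)
    thus ?thesis using add \<open>x' \<in> K\<close> \<open>y' \<in> K\<close> by blast
  qed
  have scale': "(\<lambda>i. c * x i) \<in> \<pi> ` K" if x: "x \<in> \<pi> ` K" and "0 \<le> c" for x c
  proof -
    obtain x' where "x' \<in> K" "x = \<pi> x'" using x by blast
    hence "(\<lambda>i. c * x i) = \<pi> (\<lambda>i. c * x' i)" by (auto simp: \<pi>_def)
    thus ?thesis using scale \<open>x' \<in> K\<close> \<open>0 \<le> c\<close> by blast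
  qed
  have supp: "x i = 0" if "x \<in> \<pi> ` K" "i \<notin> S" for x i
    using that by (auto simp: \<pi>_def)
  have supp_z: "\<pi> z i = 0" if "i \<notin> S" for i
    using that by (simp add: \<pi>_def)
  have "\<exists>a. (\<Sum>i\<in>S. a i * \<pi> z i) < 0 \<and> (\<forall>x\<in>\<pi> ` K. 0 \<le> (\<Sum>i\<in>S. a i * x i))"
    by (rule cone_separation_finite_support)
      (use \<open>finite S\<close> supp supp_z zero' add' scale' separated[folded \<pi>_def] in auto)
  moreover have "(\<Sum>i\<in>S. a i * \<pi> x i) = (\<Sum>i\<in>S. a i * x i)" for a x
    by (simp add: \<pi>_def)
  ultimately show ?thesis using \<open>finite S\<close> by auto
qed

section \<open>Signed measures as functionals\<close>

lemma signed_measure_add: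
  "\<mu> \<in> signed_measures \<Longrightarrow> f \<in> cfun \<Longrightarrow> g \<in> cfun \<Longrightarrow> \<mu> (\<lambda>x. f x + g x) = \<mu> f + \<mu> g"
  by (simp add: signed_measures_def)

lemma signed_measure_scale:
  "\<mu> \<in> signed_measures \<Longrightarrow> f \<in> cfun \<Longrightarrow> \<mu> (\<lambda>x. c * f x) = c * \<mu> f"
  by (simp add: signed_measures_def)

lemma signed_measure_not_cfun: "\<mu> \<in> signed_measures \<Longrightarrow> f \<notin> cfun \<Longrightarrow> \<mu> f = 0"
  by (simp add: signed_measures_def)

lemma cfun_const [simp]: "(\<lambda>x. c) \<in> cfun"
  by (simp add: cfun_def)

lemma cfun_add: "f \<in> cfun \<Longrightarrow> g \<in> cfun \<Longrightarrow> (\<lambda>x. f x + g x) \<in> cfun"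
  by (simp add: cfun_def continuous_on_add)

lemma cfun_scale: "f \<in> cfun \<Longrightarrow> (\<lambda>x. c * f x) \<in> cfun"
  by (simp add: cfun_def continuous_on_mult_left)

lemma cfun_sum: "G \<subseteq> cfun \<Longrightarrow> (\<lambda>x. \<Sum>f\<in>G. c f * f x) \<in> cfun"
  unfolding cfun_def mem_Collect_eq subset_iff by (intro continuous_on_sum continuous_on_mult_left) auto

lemma signed_measure_sum:
  assumes "\<mu> \<in> signed_measures" "finite G" "G \<subseteq> cfun"
  shows "\<mu> (\<lambda>x. \<Sum>f\<in>G. c f * f x) = (\<Sum>f\<in>G. c f * \<mu> f)"
  using assms(2,3)
proof (induction G rule: finite_induct)
  case empty
  thus ?case using signed_measure_scale[OF assms(1) cfun_const, of 0 0] by simp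
next
  case (insert f G)
  hence "\<mu> (\<lambda>x. \<Sum>f\<in>insert f G. c f * f x) = \<mu> (\<lambda>x. c f * f x) + \<mu> (\<lambda>x. \<Sum>f\<in>G. c f * f x)"
    using signed_measure_add[OF assms(1) cfun_scale cfun_sum] by simp
  thus ?case using insert signed_measure_scale[OF assms(1)] by simp
qed

lemma scaled_signed_measure:
  assumes "\<mu> \<in> signed_measures"
  shows "(\<lambda>f. c * \<mu> f) \<in> signed_measures"
proof -
  obtain C where C: "\<forall>f\<in>cfun. \<bar>\<mu> f\<bar> \<le> C * (SUP x. \<bar>f x\<bar>)"
    using assms by (auto simp: signed_measures_def)
  have "\<bar>c * \<mu> f\<bar> \<le> (\<bar>c\<bar> * C) * (SUP x. \<bar>f x\<bar>)" if "f \<in> cfun" for f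
    using mult_left_mono[OF C[rule_format, OF that], of "\<bar>c\<bar>"] by (simp add: abs_mult mult.assoc)
  hence "\<exists>C. \<forall>f\<in>cfun. \<bar>c * \<mu> f\<bar> \<le> C * (SUP x. \<bar>f x\<bar>)" by blast
  thus ?thesis using assms by (auto simp: signed_measures_def algebra_simps)
qed

lemma Vspace_memD:
  assumes "w \<in> Vspace"
  shows "fst w \<in> signed_measures" "snd w \<in> signed_measures" "fst w (\<lambda>x. 1) = 0"
  using assms by (auto simp: Vspace_def zero_measures_def integ_def)

lemma Vspace_scale_pair: "v \<in> Vspace \<Longrightarrow> scale_pair c v \<in> Vspace"
  by (auto simp: Vspace_def scale_pair_def zero_measures_def integ_def scaled_signed_measure)

lemma Vspace_neg_pair: "v \<in> Vspace \<Longrightarrow> neg_pair v \<in> Vspace"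
  using Vspace_scale_pair[of v "-1"] by (simp add: scale_pair_def neg_pair_def)

lemma continuous_on_eval_fst: "continuous_on UNIV (\<lambda>w :: 'a msr \<times> 'a msr. fst w f)"
  and continuous_on_eval_snd: "continuous_on UNIV (\<lambda>w :: 'a msr \<times> 'a msr. snd w f)"
  using continuous_on_compose2[OF continuous_on_product_coordinates[of f] continuous_on_fst[OF continuous_on_id]]
    continuous_on_compose2[OF continuous_on_product_coordinates[of f] continuous_on_snd[OF continuous_on_id]]
  by auto

lemma continuous_on_scale_pair: "continuous_on UNIV (scale_pair c :: 'a msr \<times> 'a msr \<Rightarrow> _)"
  unfolding scale_pair_def
  by (intro continuous_on_Pair continuous_on_coordinatewise_then_product continuous_intros
      continuous_on_eval_fst continuous_on_eval_snd)

definition cone_of :: "('a::topological_space msr \<times> 'a msr) set \<Rightarrow> ('a msr \<times> 'a msr) set" where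
  "cone_of P = {scale_pair c p | c p. 0 \<le> c \<and> p \<in> P}"

lemma hat_eq: "hat P = Vspace \<inter> closure (cone_of P)"
  by (simp add: hat_def cone_of_def)

lemma hat_subset_Vspace: "hat P \<subseteq> Vspace"
  by (simp add: hat_def)

lemma scale_pair_scale_pair: "scale_pair c (scale_pair d p) = scale_pair (c * d) p"
  by (simp add: scale_pair_def mult.assoc)

lemma mem_hat:
  assumes "P \<subseteq> Vspace" "p \<in> P"
  shows "p \<in> hat P"
proof -
  have "p = scale_pair 1 p" by (simp add: scale_pair_def)
  hence "p \<in> cone_of P" unfolding cone_of_def using assms(2) zero_le_one by blast
  thus ?thesis using assms closure_subset by (auto simp: hat_eq)
qed

lemma hat_scale_pair:
  assumes "w \<in> hat P" "0 \<le> c"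
  shows "scale_pair c w \<in> hat P"
proof -
  have "scale_pair c ` cone_of P \<subseteq> cone_of P"
  proof
    fix x assume "x \<in> scale_pair c ` cone_of P"
    then obtain d p where "0 \<le> d" "p \<in> P" "x = scale_pair (c * d) p"
      unfolding cone_of_def by (auto simp: scale_pair_scale_pair)
    thus "x \<in> cone_of P" unfolding cone_of_def using \<open>0 \<le> c\<close> mult_nonneg_nonneg by blast
  qed
  hence "scale_pair c ` closure (cone_of P) \<subseteq> closure (cone_of P)"
    using closure_subset[of "cone_of P"]
    by (intro image_closure_subset[OF continuous_on_subset[OF continuous_on_scale_pair] closed_closure])
      auto
  thus ?thesis using assms(1) Vspace_scale_pair[of w c] by (auto simp: hat_eq)
qed

lemma hat_add_pair:
  assumes "convex_pairs (hat P)" "x \<in> hat P" "y \<in> hat P"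
  shows "add_pair x y \<in> hat P"
proof -
  have "add_pair (scale_pair (1/2) x) (scale_pair (1 - 1/2) y) \<in> hat P"
    using assms(1)[unfolded convex_pairs_def, rule_format, OF assms(2,3), of "1/2"] by simp
  hence "scale_pair 2 (add_pair (scale_pair (1/2) x) (scale_pair (1 - 1/2) y)) \<in> hat P"
    by (rule hat_scale_pair) simp
  moreover have "scale_pair 2 (add_pair (scale_pair (1/2) x) (scale_pair (1 - 1/2) y)) = add_pair x y"
    by (simp add: scale_pair_def add_pair_def algebra_simps)
  ultimately show ?thesis by simp
qed

section \<open>Separation in \<open>V\<close>\<close>

text \<open>The weak-star topology on pairs of functionals is the product topology on the disjoint
  union of the two index sets.\<close>
definition pair_coords :: "'a msr \<times> 'a msr \<Rightarrow> ('a \<Rightarrow> real) + ('a \<Rightarrow> real) \<Rightarrow> real" where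
  "pair_coords w = case_sum (fst w) (snd w)"

lemma pair_coords_zero: "pair_coords (zero_msr, zero_msr) = (\<lambda>_. 0)"
  by (auto simp: pair_coords_def zero_msr_def split: sum.split)

lemma pair_coords_add_pair:
  "pair_coords (add_pair v w) = (\<lambda>i. pair_coords v i + pair_coords w i)"
  by (auto simp: pair_coords_def add_pair_def split: sum.split)

lemma pair_coords_scale_pair: "pair_coords (scale_pair c w) = (\<lambda>i. c * pair_coords w i)"
  by (auto simp: pair_coords_def scale_pair_def split: sum.split)

lemma pair_coords_notin_closure:
  assumes "v \<notin> closure C"
  shows "pair_coords v \<notin> closure (pair_coords ` C)"
proof
  define unpair where "unpair x = (\<lambda>f. x (Inl f), \<lambda>f. x (Inr f))"
    for x :: "('a \<Rightarrow> real) + ('a \<Rightarrow> real) \<Rightarrow> real"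
  have "continuous_on UNIV unpair"
    unfolding unpair_def
    by (intro continuous_on_Pair continuous_on_coordinatewise_then_product
        continuous_on_product_coordinates)
  moreover have unpair_coords: "unpair (pair_coords w) = w" for w
    by (simp add: unpair_def pair_coords_def)
  hence "unpair ` pair_coords ` C \<subseteq> closure C" using closure_subset[of C] by (simp add: image_image)
  ultimately have "unpair ` closure (pair_coords ` C) \<subseteq> closure C"
    by (intro image_closure_subset[OF continuous_on_subset closed_closure]) auto
  moreover assume "pair_coords v \<in> closure (pair_coords ` C)"
  ultimately have "unpair (pair_coords v) \<in> closure C" by blast
  thus False using assms by (simp only: unpair_coords)
qed

text \<open>Dropping the discontinuous members does not change the integrals, since measures vanish
  on them, and keeps the combination continuous.\<close>
definition cfun_comb :: "(('a::topological_space \<Rightarrow> real) \<Rightarrow> real) \<Rightarrow> ('a \<Rightarrow> real) set \<Rightarrow> 'a \<Rightarrow> real" where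
  "cfun_comb c F x = (\<Sum>f\<in>F \<inter> cfun. c f * f x)"

lemma cfun_comb_cfun: "cfun_comb c F \<in> cfun"
  unfolding cfun_comb_def by (intro cfun_sum) auto

lemma signed_measure_cfun_comb:
  assumes "\<mu> \<in> signed_measures" "finite F"
  shows "\<mu> (cfun_comb c F) = (\<Sum>f\<in>F. c f * \<mu> f)"
proof -
  have "(\<Sum>f\<in>F. c f * \<mu> f) = (\<Sum>f\<in>F \<inter> cfun. c f * \<mu> f)"
    using assms by (intro sum.mono_neutral_right) (auto simp: signed_measure_not_cfun)
  thus ?thesis
    using signed_measure_sum[OF assms(1)] assms(2) by (simp add: cfun_comb_def[abs_def])
qed

lemma sum_pair_coords:
  assumes "finite S" "w \<in> Vspace"
  shows "(\<Sum>i\<in>S. a i * pair_coords w i) =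
    fst w (cfun_comb (a \<circ> Inl) (Inl -` S)) + snd w (cfun_comb (a \<circ> Inr) (Inr -` S))"
proof -
  have S_eq: "S = Inl -` S <+> Inr -` S"
  proof (rule set_eqI)
    show "i \<in> S \<longleftrightarrow> i \<in> Inl -` S <+> Inr -` S" for i by (cases i) auto
  qed
  have fin: "finite (Inl -` S)" "finite (Inr -` S)"
    using assms(1) by (auto intro: finite_vimageI)
  have "(\<Sum>i\<in>S. a i * pair_coords w i) = (\<Sum>i\<in>Inl -` S <+> Inr -` S. a i * pair_coords w i)"
    by (rule sum.cong[OF S_eq refl])
  also have "\<dots> = (\<Sum>f\<in>Inl -` S. a (Inl f) * fst w f) + (\<Sum>f\<in>Inr -` S. a (Inr f) * snd w f)"
    unfolding sum.Plus[OF fin] comp_def pair_coords_def sum.case ..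
  also have "\<dots> = fst w (cfun_comb (a \<circ> Inl) (Inl -` S)) + snd w (cfun_comb (a \<circ> Inr) (Inr -` S))"
    unfolding signed_measure_cfun_comb[OF Vspace_memD(1)[OF assms(2)] fin(1)]
      signed_measure_cfun_comb[OF Vspace_memD(2)[OF assms(2)] fin(2)] comp_apply ..
  finally show ?thesis .
qed

lemma Vspace_separation:
  assumes convex: "convex_pairs (hat P)" and zero: "(zero_msr, zero_msr) \<in> hat P"
    and v: "v \<in> Vspace" "v \<notin> hat P"
  shows "\<exists>\<eta> g. \<eta> \<in> cfun \<and> g \<in> cfun \<and> fst v \<eta> + snd v g < 0 \<and>
           (\<forall>w\<in>hat P. 0 \<le> fst w \<eta> + snd w g)"
proof -
  let ?K = "pair_coords ` hat P"
  have "closure (hat P) \<subseteq> closure (cone_of P)"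
    by (rule closure_minimal) (auto simp: hat_eq)
  hence "v \<notin> closure (hat P)" using v unfolding hat_eq by blast
  hence notin: "pair_coords v \<notin> closure ?K"
    by (rule pair_coords_notin_closure)
  have "(\<lambda>_. 0) = pair_coords (zero_msr, zero_msr)" by (simp add: pair_coords_zero)
  hence zero': "(\<lambda>_. 0) \<in> ?K" using zero by (rule image_eqI)
  have add: "(\<lambda>i. x i + y i) \<in> ?K" if xy: "x \<in> ?K" "y \<in> ?K" for x y
  proof -
    obtain x' y' where x'y': "x' \<in> hat P" "y' \<in> hat P" "x = pair_coords x'" "y = pair_coords y'"
      using xy by blast
    hence "(\<lambda>i. x i + y i) = pair_coords (add_pair x' y')" by (simp add: pair_coords_add_pair)
    thus ?thesis using hat_add_pair[OF convex x'y'(1,2)] by (rule image_eqI)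
  qed
  have scale: "(\<lambda>i. c * x i) \<in> ?K" if x: "x \<in> ?K" and "0 \<le> c" for x c
  proof -
    obtain x' where "x' \<in> hat P" "x = pair_coords x'" using x by blast
    hence "(\<lambda>i. c * x i) = pair_coords (scale_pair c x')" by (simp add: pair_coords_scale_pair)
    thus ?thesis using hat_scale_pair[OF \<open>x' \<in> hat P\<close> \<open>0 \<le> c\<close>] by (rule image_eqI)
  qed
  obtain S a where S: "finite S" and sep: "(\<Sum>i\<in>S. a i * pair_coords v i) < 0"
      "\<forall>x\<in>?K. 0 \<le> (\<Sum>i\<in>S. a i * x i)"
    using cone_separation_product_topology[OF zero' add scale notin] by blast
  define \<eta> where "\<eta> = cfun_comb (a \<circ> Inl) (Inl -` S)"
  define g where "g = cfun_comb (a \<circ> Inr) (Inr -` S)"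
  have eq: "(\<Sum>i\<in>S. a i * pair_coords w i) = fst w \<eta> + snd w g" if "w \<in> Vspace" for w
    unfolding \<eta>_def g_def using S that by (rule sum_pair_coords)
  have "fst v \<eta> + snd v g < 0" using sep(1) eq[OF v(1)] by simp
  moreover have "\<forall>w\<in>hat P. 0 \<le> fst w \<eta> + snd w g"
    using sep(2) eq hat_subset_Vspace by fastforce
  moreover have "\<eta> \<in> cfun" "g \<in> cfun" unfolding \<eta>_def g_def by (rule cfun_comb_cfun)+
  ultimately show ?thesis by blast
qed

section \<open>Clausius-Duhem pairs\<close>

lemma exists_pos_scale_below:
  fixes g h :: "'a::topological_space \<Rightarrow> real"
  assumes "compact (UNIV :: 'a set)" "continuous_on UNIV g" "continuous_on UNIV h" "\<And>x. 0 < h x"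
  shows "\<exists>s>0. \<forall>x. s * g x < h x"
proof -
  obtain x0 where x0: "\<And>x. h x0 \<le> h x"
    using continuous_attains_inf[OF assms(1) _ assms(3)] by auto
  obtain x1 where x1: "\<And>x. \<bar>g x\<bar> \<le> \<bar>g x1\<bar>"
    using continuous_attains_sup[OF assms(1) _ continuous_on_rabs[OF assms(2)]] by auto
  define s where "s = h x0 / (\<bar>g x1\<bar> + 1)"
  have "s > 0" using assms(4) by (simp add: s_def add_pos_nonneg)
  moreover have "s * g x < h x" for x
  proof -
    have "s * g x \<le> s * \<bar>g x1\<bar>"
      using \<open>s > 0\<close> x1[of x] by (intro mult_left_mono) auto
    also have "\<dots> < s * (\<bar>g x1\<bar> + 1)" using \<open>s > 0\<close> by simp
    also have "\<dots> = h x0" by (simp add: s_def)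
    finally show ?thesis using x0[of x] by linarith
  qed
  ultimately show ?thesis by blast
qed

lemma clausius_duhem_perturb:
  assumes PV: "P \<subseteq> Vspace" and cd: "clausius_duhem P \<eta>0 T0"
    and \<eta>: "\<eta> \<in> cfun" and g: "g \<in> cfun"
    and nonneg: "\<And>dm q. (dm, q) \<in> P \<Longrightarrow> 0 \<le> dm \<eta> + q g"
    and s: "0 \<le> s" "\<And>x. s * g x < 1 / T0 x"
  shows "clausius_duhem P (\<lambda>x. \<eta>0 x + s * \<eta> x) (\<lambda>x. 1 / (1 / T0 x - s * g x))"
  unfolding clausius_duhem_def
proof (intro conjI allI ballI)
  have \<eta>0: "\<eta>0 \<in> cfun" and T0: "continuous_on UNIV T0" "\<And>x. 0 < T0 x"
    using cd by (auto simp: clausius_duhem_def cfun_def)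
  have inv_T0: "(\<lambda>x. 1 / T0 x) \<in> cfun"
    using T0 by (auto simp: cfun_def intro!: continuous_intros simp: less_imp_neq[symmetric])
  show "continuous_on UNIV (\<lambda>x. \<eta>0 x + s * \<eta> x)"
    using cfun_add[OF \<eta>0 cfun_scale[OF \<eta>]] by (simp add: cfun_def)
  have "(\<lambda>x. 1 / T0 x - s * g x) \<in> cfun"
    using cfun_add[OF inv_T0 cfun_scale[OF g, of "- s"]] by simp
  thus "continuous_on UNIV (\<lambda>x. 1 / (1 / T0 x - s * g x))"
    using s(2) by (auto simp: cfun_def intro!: continuous_intros simp: less_imp_neq[symmetric])
  show "0 < 1 / (1 / T0 x - s * g x)" for x using s(2)[of x] by simp
  fix w assume "w \<in> P"
  then obtain dm q where w: "w = (dm, q)" "(dm, q) \<in> P" by (cases w) auto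
  hence dm: "dm \<in> signed_measures" and q: "q \<in> signed_measures"
    using PV Vspace_memD by fastforce+
  have "q (\<lambda>x. 1 / T0 x - s * g x) = q (\<lambda>x. 1 / T0 x + (- s) * g x)" by simp
  also have "\<dots> = q (\<lambda>x. 1 / T0 x) + (- s) * q g"
    by (simp only: signed_measure_add[OF q inv_T0 cfun_scale[OF g]] signed_measure_scale[OF q g])
  also have "\<dots> \<le> dm \<eta>0 + s * dm \<eta>"
    using cd w(2) nonneg[OF w(2)] s(1) mult_nonneg_nonneg[OF s(1) nonneg[OF w(2)]]
    by (auto simp: clausius_duhem_def integ_def distrib_left)
  also have "\<dots> = dm (\<lambda>x. \<eta>0 x + s * \<eta> x)"
    using signed_measure_add[OF dm \<eta>0 cfun_scale[OF \<eta>]] signed_measure_scale[OF dm \<eta>] by simp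
  finally show "case w of (dm, q) \<Rightarrow>
      integ q (\<lambda>x. 1 / (1 / (1 / T0 x - s * g x))) \<le> integ dm (\<lambda>x. \<eta>0 x + s * \<eta> x)"
    using w(1) by (simp add: integ_def)
qed

definition clausius_gap :: "('a \<Rightarrow> real) \<Rightarrow> ('a \<Rightarrow> real) \<Rightarrow> 'a msr \<times> 'a msr \<Rightarrow> real" where
  "clausius_gap \<eta> T w = integ (fst w) \<eta> - integ (snd w) (\<lambda>x. 1 / T x)"

lemma clausius_gap_neg_pair: "clausius_gap \<eta> T (neg_pair v) = - clausius_gap \<eta> T v"
  by (simp add: clausius_gap_def neg_pair_def integ_def)

lemma clausius_gap_nonneg_on_hat:
  assumes "clausius_duhem P \<eta> T" "w \<in> hat P"
  shows "0 \<le> clausius_gap \<eta> T w"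
proof -
  have "continuous_on UNIV (clausius_gap \<eta> T)"
    unfolding clausius_gap_def[abs_def] integ_def
    by (intro continuous_on_diff continuous_on_eval_fst continuous_on_eval_snd)
  hence "closed {w. 0 \<le> clausius_gap \<eta> T w}"
    by (intro closed_Collect_le continuous_on_const)
  moreover have "0 \<le> clausius_gap \<eta> T (scale_pair c p)" if "0 \<le> c" "p \<in> P" for c p
  proof -
    have "0 \<le> clausius_gap \<eta> T p"
      using assms(1) \<open>p \<in> P\<close> by (cases p) (auto simp: clausius_duhem_def clausius_gap_def integ_def)
    moreover have "clausius_gap \<eta> T (scale_pair c p) = c * clausius_gap \<eta> T p"
      by (simp add: clausius_gap_def scale_pair_def integ_def right_diff_distrib)
    ultimately show ?thesis using \<open>0 \<le> c\<close> by simp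
  qed
  hence "cone_of P \<subseteq> {w. 0 \<le> clausius_gap \<eta> T w}" by (auto simp: cone_of_def)
  ultimately have "closure (cone_of P) \<subseteq> {w. 0 \<le> clausius_gap \<eta> T w}"
    by (rule closure_minimal[rotated])
  thus ?thesis using assms(2) by (auto simp: hat_eq)
qed

text \<open>The additive constant \<open>\<beta>\<close> is invisible because the first component of a member of
  \<open>V\<close> has total mass zero.\<close>
lemma functional_eq_gap_multiple:
  assumes w: "w \<in> Vspace" and \<eta>0: "\<eta>0 \<in> cfun" and inv_T0: "(\<lambda>x. 1 / T0 x) \<in> cfun"
    and \<eta>: "\<eta> \<in> cfun" and g: "g \<in> cfun" and "s \<noteq> 0"
    and s\<eta>: "\<And>x. s * \<eta> x = c * \<eta>0 x + \<beta> * 1" and sg: "\<And>x. s * g x = (- c) * (1 / T0 x)"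
  shows "fst w \<eta> + snd w g = (c / s) * clausius_gap \<eta>0 T0 w"
proof -
  note dm = Vspace_memD(1)[OF w] and q = Vspace_memD(2)[OF w]
  have "s * fst w \<eta> = fst w (\<lambda>x. s * \<eta> x)" by (rule signed_measure_scale[OF dm \<eta>, symmetric])
  also have "\<dots> = fst w (\<lambda>x. c * \<eta>0 x + \<beta> * 1)" by (simp only: s\<eta>)
  also have "\<dots> = c * fst w \<eta>0 + \<beta> * fst w (\<lambda>x. 1)"
    by (simp only: signed_measure_add[OF dm cfun_scale[OF \<eta>0] cfun_scale[OF cfun_const]]
        signed_measure_scale[OF dm \<eta>0] signed_measure_scale[OF dm cfun_const])
  finally have fst_part: "s * fst w \<eta> = c * fst w \<eta>0" using Vspace_memD(3)[OF w] by simp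
  have "s * snd w g = snd w (\<lambda>x. s * g x)" by (rule signed_measure_scale[OF q g, symmetric])
  also have "\<dots> = snd w (\<lambda>x. (- c) * (1 / T0 x))" by (simp only: sg)
  also have "\<dots> = (- c) * snd w (\<lambda>x. 1 / T0 x)" by (rule signed_measure_scale[OF q inv_T0])
  finally have snd_part: "s * snd w g = (- c) * snd w (\<lambda>x. 1 / T0 x)" .
  have "s * (fst w \<eta> + snd w g) = c * clausius_gap \<eta>0 T0 w"
    using fst_part snd_part by (simp add: clausius_gap_def integ_def algebra_simps)
  thus ?thesis using \<open>s \<noteq> 0\<close> by (simp add: field_simps)
qed

locale unique_clausius_duhem =
  fixes P :: "('a::topological_space msr \<times> 'a msr) set" and \<eta>0 T0 :: "'a \<Rightarrow> real"
  assumes compact_UNIV: "compact (UNIV :: 'a set)"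
    and kelvin_planck: "kelvin_planck P"
    and clausius_duhem: "clausius_duhem P \<eta>0 T0"
    and clausius_duhem_unique: "\<And>\<eta> T. clausius_duhem P \<eta> T \<Longrightarrow>
           \<exists>\<alpha>>0. \<exists>\<beta>. T = (\<lambda>x. \<alpha> * T0 x) \<and> \<eta> = (\<lambda>x. \<eta>0 x / \<alpha> + \<beta>)"
begin

lemma P_subset_Vspace: "P \<subseteq> Vspace"
  and convex_hat: "convex_pairs (hat P)"
  using kelvin_planck by (auto simp: kelvin_planck_def thermo_theory_def)

lemma zero_in_hat: "(zero_msr, zero_msr) \<in> hat P"
  using kelvin_planck unfolding kelvin_planck_def by blast

text \<open>Perturbing \<open>(\<eta>0, T0)\<close> in the direction of a functional that is nonnegative on \<open>P\<close>
  gives another Clausius-Duhem pair; uniqueness forces the functional to be a multiple of the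
  Clausius-Duhem gap.\<close>
lemma nonneg_functional_proportional_to_gap:
  assumes \<eta>: "\<eta> \<in> cfun" and g: "g \<in> cfun"
    and nonneg: "\<And>dm q. (dm, q) \<in> P \<Longrightarrow> 0 \<le> dm \<eta> + q g"
  shows "\<exists>c. \<forall>w\<in>Vspace. fst w \<eta> + snd w g = c * clausius_gap \<eta>0 T0 w"
proof -
  have \<eta>0: "\<eta>0 \<in> cfun" and T0: "continuous_on UNIV T0" "\<And>x. 0 < T0 x"
    using clausius_duhem by (auto simp: clausius_duhem_def cfun_def)
  have inv_T0: "(\<lambda>x. 1 / T0 x) \<in> cfun"
    using T0 by (auto simp: cfun_def intro!: continuous_intros simp: less_imp_neq[symmetric])
  obtain s where s: "s > 0" "\<And>x. s * g x < 1 / T0 x"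
    using exists_pos_scale_below[OF compact_UNIV, of g "\<lambda>x. 1 / T0 x"] g inv_T0 T0(2)
    by (auto simp: cfun_def)
  have "clausius_duhem P (\<lambda>x. \<eta>0 x + s * \<eta> x) (\<lambda>x. 1 / (1 / T0 x - s * g x))"
    by (rule clausius_duhem_perturb[OF P_subset_Vspace clausius_duhem \<eta> g]) (use nonneg s in auto)
  then obtain \<alpha> \<beta> where \<alpha>: "\<alpha> > 0"
    and T: "(\<lambda>x. 1 / (1 / T0 x - s * g x)) = (\<lambda>x. \<alpha> * T0 x)"
    and \<eta>s: "(\<lambda>x. \<eta>0 x + s * \<eta> x) = (\<lambda>x. \<eta>0 x / \<alpha> + \<beta>)"
    using clausius_duhem_unique by blast
  define c where "c = 1 / \<alpha> - 1"
  have s\<eta>: "s * \<eta> x = c * \<eta>0 x + \<beta> * 1" for x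
  proof -
    have "\<eta>0 x + s * \<eta> x = \<eta>0 x / \<alpha> + \<beta>" using fun_cong[OF \<eta>s, of x] by simp
    thus ?thesis using \<alpha> by (simp add: c_def field_simps)
  qed
  have sg: "s * g x = (- c) * (1 / T0 x)" for x
  proof -
    have "inverse (1 / T0 x - s * g x) = \<alpha> * T0 x"
      using fun_cong[OF T, of x] by (simp add: inverse_eq_divide)
    hence "1 / T0 x - s * g x = inverse (\<alpha> * T0 x)" by (metis inverse_inverse_eq)
    hence "s * g x = 1 / T0 x - inverse (\<alpha> * T0 x)" by linarith
    also have "\<dots> = (- c) * (1 / T0 x)"
      using \<alpha> T0(2)[of x] by (simp add: c_def field_simps)
    finally show ?thesis .
  qed
  have "\<forall>w\<in>Vspace. fst w \<eta> + snd w g = (c / s) * clausius_gap \<eta>0 T0 w"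
    using functional_eq_gap_multiple[OF _ \<eta>0 inv_T0 \<eta> g _ s\<eta> sg] s(1) by simp
  thus ?thesis by blast
qed

lemma separation_by_gap:
  assumes "v \<in> Vspace" "v \<notin> hat P"
  shows "\<exists>c. c * clausius_gap \<eta>0 T0 v < 0 \<and> (\<forall>w\<in>hat P. 0 \<le> c * clausius_gap \<eta>0 T0 w)"
proof -
  obtain \<eta> g where \<eta>: "\<eta> \<in> cfun" and g: "g \<in> cfun" and "fst v \<eta> + snd v g < 0"
    and nonneg_hat: "\<forall>w\<in>hat P. 0 \<le> fst w \<eta> + snd w g"
    using Vspace_separation[OF convex_hat zero_in_hat assms] by blast
  moreover have "0 \<le> dm \<eta> + q g" if "(dm, q) \<in> P" for dm q
    using nonneg_hat mem_hat[OF P_subset_Vspace that] by fastforce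
  then obtain c where "\<forall>w\<in>Vspace. fst w \<eta> + snd w g = c * clausius_gap \<eta>0 T0 w"
    using nonneg_functional_proportional_to_gap[OF \<eta> g] by blast
  ultimately show ?thesis using assms(1) hat_subset_Vspace by (metis subsetD)
qed

lemma zero_gap_mem_hat: "v \<in> Vspace \<Longrightarrow> clausius_gap \<eta>0 T0 v = 0 \<Longrightarrow> v \<in> hat P"
  using separation_by_gap by fastforce

lemma reversible_iff_zero_gap: "reversible P v \<longleftrightarrow> v \<in> Vspace \<and> clausius_gap \<eta>0 T0 v = 0"
proof
  assume "reversible P v"
  hence "v \<in> hat P" "neg_pair v \<in> hat P" by (auto simp: reversible_def)
  thus "v \<in> Vspace \<and> clausius_gap \<eta>0 T0 v = 0"
    using clausius_gap_nonneg_on_hat[OF clausius_duhem] clausius_gap_neg_pair hat_subset_Vspace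
    by (metis neg_0_le_iff_le order_antisym subsetD)
next
  assume "v \<in> Vspace \<and> clausius_gap \<eta>0 T0 v = 0"
  thus "reversible P v"
    using zero_gap_mem_hat[of v] zero_gap_mem_hat[OF Vspace_neg_pair, of v] clausius_gap_neg_pair[of \<eta>0 T0 v]
    by (simp add: reversible_def)
qed

lemma pos_gap_mem_hat:
  assumes "u \<in> hat P" "0 < clausius_gap \<eta>0 T0 u" "v \<in> Vspace" "0 < clausius_gap \<eta>0 T0 v"
  shows "v \<in> hat P"
proof (rule ccontr)
  assume "v \<notin> hat P"
  then obtain c where "c * clausius_gap \<eta>0 T0 v < 0" "0 \<le> c * clausius_gap \<eta>0 T0 u"
    using separation_by_gap[OF assms(3)] assms(1) by blast
  thus False using assms(2,4) by (simp add: mult_less_0_iff zero_le_mult_iff)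
qed

lemma irreversible_imp_nonneg_gap_mem_hat:
  assumes "p \<in> P" "\<not> reversible P p" "v \<in> Vspace" "0 \<le> clausius_gap \<eta>0 T0 v"
  shows "v \<in> hat P"
proof (cases "clausius_gap \<eta>0 T0 v = 0")
  case False
  have "p \<in> hat P" using mem_hat[OF P_subset_Vspace \<open>p \<in> P\<close>] .
  moreover from this have "0 < clausius_gap \<eta>0 T0 p"
    using clausius_gap_nonneg_on_hat[OF clausius_duhem] reversible_iff_zero_gap[of p]
      hat_subset_Vspace assms(2) by (auto simp: order_less_le)
  ultimately show ?thesis using pos_gap_mem_hat assms(3,4) False by simp
qed (use zero_gap_mem_hat assms(3) in blast)

end

theorem corollary5p1:
  fixes P :: "('a::t2_space msr \<times> 'a msr) set" and \<eta>0 T0 :: "'a \<Rightarrow> real"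
  assumes "compact (UNIV :: 'a set)"
    and "kelvin_planck P"
    and "clausius_duhem P \<eta>0 T0"
    and "\<And>\<eta> T. clausius_duhem P \<eta> T \<Longrightarrow>
           \<exists>\<alpha>>0. \<exists>\<beta>. T = (\<lambda>x. \<alpha> * T0 x) \<and> \<eta> = (\<lambda>x. \<eta>0 x / \<alpha> + \<beta>)"
  shows "{v. reversible P v} =
           {(dm, q) \<in> Vspace. integ dm \<eta>0 = integ q (\<lambda>x. 1 / T0 x)}
       \<and> ((\<exists>v\<in>{(dm, q) \<in> Vspace. integ dm \<eta>0 > integ q (\<lambda>x. 1 / T0 x)}. v \<in> hat P) \<longrightarrow>
           {(dm, q) \<in> Vspace. integ dm \<eta>0 > integ q (\<lambda>x. 1 / T0 x)} \<subseteq> hat P)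
       \<and> ((\<exists>p\<in>P. \<not> reversible P p) \<longrightarrow>
           {(dm, q) \<in> Vspace. integ dm \<eta>0 \<ge> integ q (\<lambda>x. 1 / T0 x)} \<subseteq> hat P)"
proof -
  interpret unique_clausius_duhem P \<eta>0 T0
    using assms by unfold_locales
  let ?gap = "clausius_gap \<eta>0 T0"
  have zero: "{(dm, q) \<in> Vspace. integ dm \<eta>0 = integ q (\<lambda>x. 1 / T0 x)} = {v \<in> Vspace. ?gap v = 0}"
    and pos: "{(dm, q) \<in> Vspace. integ dm \<eta>0 > integ q (\<lambda>x. 1 / T0 x)} = {v \<in> Vspace. 0 < ?gap v}"
    and nonneg: "{(dm, q) \<in> Vspace. integ dm \<eta>0 \<ge> integ q (\<lambda>x. 1 / T0 x)} =
      {v \<in> Vspace. 0 \<le> ?gap v}"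
    by (auto simp: clausius_gap_def)
  have "{v. reversible P v} = {v \<in> Vspace. ?gap v = 0}"
    using reversible_iff_zero_gap by blast
  moreover have "(\<exists>u\<in>{v \<in> Vspace. 0 < ?gap v}. u \<in> hat P) \<longrightarrow>
      {v \<in> Vspace. 0 < ?gap v} \<subseteq> hat P"
    using pos_gap_mem_hat by blast
  moreover have "(\<exists>p\<in>P. \<not> reversible P p) \<longrightarrow> {v \<in> Vspace. 0 \<le> ?gap v} \<subseteq> hat P"
    using irreversible_imp_nonneg_gap_mem_hat by blast
  ultimately show ?thesis unfolding zero pos nonneg by blast
qed

end
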